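(* Let $(X,\mathcal F)$ be a measurable space in which every singleton $\{t\}$, $t\in X$, belongs to $\mathcal F$, and let $g,h\colon X\to[0,\infty)$ be measurable with $\inf_{x\in X} g(x)h(x)=0$. Then there is no functional $c\colon\mathcal M\to[0,\infty)$ such that for every $\mu\in\mathcal M$ and every measurable $f\colon X\to[0,\infty)$ with $\int_X f\,d\mu<\infty$, $$\int_X f\,d\mu\le c(\mu)\Big(\int_X g f^2\,d\mu\Big)^{1/4}\Big(\int_X h f^2\,d\mu\Big)^{1/4},$$ where all integrals are Choquet integrals.
   Context: $\mathcal M$ denotes the set of monotone measures on $(X,\mathcal F)$, i.e. maps $\mu\colon\mathcal F\to[0,\infty]$ with $\mu(\emptyset)=0$, $\mu(X)>0$ and $\mu(A)\le\mu(B)$ for $A\subset B$. The Choquet integral of a measurable $f\colon X\to[0,\infty)$ on $A\in\mathcal F$ is $\int_A f\,d\mu=\int_0^\infty\mu(A\cap\{f\ge t\})\,dt$ (improper Riemann integral). *)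

theory Defs
  imports "HOL-Analysis.Analysis"
begin

text \<open>A monotone measure is a set function on sets M with values in [0,\<infinity>];
  we represent it as a total function that is 0 outside sets M (extensional),
  so that such functions correspond bijectively to monotone measures.\<close>
definition monotone_measure :: "'a measure \<Rightarrow> ('a set \<Rightarrow> ennreal) \<Rightarrow> bool" where
  "monotone_measure M \<mu> \<longleftrightarrow>
     \<mu> {} = 0 \<and> \<mu> (space M) > 0 \<and>
     (\<forall>A\<in>sets M. \<forall>B\<in>sets M. A \<subseteq> B \<longrightarrow> \<mu> A \<le> \<mu> B) \<and>
     (\<forall>A. A \<notin> sets M \<longrightarrow> \<mu> A = 0)"

text \<open>Choquet integral of f over A: the integral over t in [0,\<infinity>) of
  \<mu>(A \<inter> {f \<ge> t}).  The integrand is nonincreasing in t, so the improper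
  Riemann integral coincides with the Lebesgue integral w.r.t. lborel.\<close>
definition choquet :: "'a measure \<Rightarrow> ('a set \<Rightarrow> ennreal) \<Rightarrow> 'a set \<Rightarrow> ('a \<Rightarrow> real) \<Rightarrow> ennreal" where
  "choquet M \<mu> A f = (\<integral>\<^sup>+ t \<in> {0..}. \<mu> (A \<inter> {x \<in> space M. f x \<ge> t}) \<partial>lborel)"

definition root4_ennreal :: "ennreal \<Rightarrow> ennreal" where
  "root4_ennreal x = (if x = top then top else ennreal (enn2real x powr (1/4)))"

end

theory Submission
  imports Defs
begin

text \<open>Test the inequality against the monotone measure that gives mass 1 to every nonempty
  measurable set, with f the indicator of a singleton {t}.  All three Choquet integrals are then
  the values at t of f, g f^2 and h f^2, so the inequality becomes 1 \<le> c (g t h t)^(1/4)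
  for every t, with one constant c; this is impossible when the infimum of g h vanishes.\<close>

definition nonempty_measure :: "'a measure \<Rightarrow> 'a set \<Rightarrow> ennreal" where
  "nonempty_measure M A = (if A \<in> sets M \<and> A \<noteq> {} then 1 else 0)"

lemma monotone_measure_nonempty_measure:
  "space M \<noteq> {} \<Longrightarrow> monotone_measure M (nonempty_measure M)"
  unfolding monotone_measure_def nonempty_measure_def by auto

lemma choquet_nonempty_measure_singleton:
  assumes t: "t \<in> space M" "{t} \<in> sets M" and "a \<ge> 0"
  shows "choquet M (nonempty_measure M) (space M) (\<lambda>x. a * indicator {t} x) = ennreal a"
proof -
  have "nonempty_measure M (space M \<inter> {x \<in> space M. s \<le> a * indicator {t} x}) * indicator {0..} s
        = indicator {0..a} s" for s :: real
  proof (cases "s \<le> 0")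
    case True
    then have "space M \<inter> {x \<in> space M. s \<le> a * indicator {t} x} = space M"
      using assms by (auto simp: indicator_def)
    then show ?thesis using True assms by (auto simp: nonempty_measure_def indicator_def)
  next
    case False
    then have "space M \<inter> {x \<in> space M. s \<le> a * indicator {t} x} = (if s \<le> a then {t} else {})"
      using assms by (auto simp: indicator_def)
    then show ?thesis using False assms by (auto simp: nonempty_measure_def indicator_def)
  qed
  then have "choquet M (nonempty_measure M) (space M) (\<lambda>x. a * indicator {t} x)
      = (\<integral>\<^sup>+ s. indicator {0..a} s \<partial>lborel)"
    unfolding choquet_def by simp
  also have "\<dots> = ennreal a" using assms by simp
  finally show ?thesis .
qed

lemma root4_ennreal_ennreal: "a \<ge> 0 \<Longrightarrow> root4_ennreal (ennreal a) = ennreal (a powr (1/4))"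
  unfolding root4_ennreal_def by simp

lemma choquet_inequality_at_singleton:
  fixes M :: "'a measure" and g h :: "'a \<Rightarrow> real"
  defines "\<nu> \<equiv> nonempty_measure M"
  assumes t: "t \<in> space M" "{t} \<in> sets M" and gh: "g t \<ge> 0" "h t \<ge> 0" and "C \<ge> 0"
    and ineq: "choquet M \<nu> (space M) (indicator {t})
      \<le> ennreal C * root4_ennreal (choquet M \<nu> (space M) (\<lambda>x. g x * (indicator {t} x)\<^sup>2))
                   * root4_ennreal (choquet M \<nu> (space M) (\<lambda>x. h x * (indicator {t} x)\<^sup>2))"
  shows "1 \<le> C * (g t * h t) powr (1/4)"
proof -
  have g_ind: "(\<lambda>x. g x * (indicator {t} x)\<^sup>2) = (\<lambda>x. g t * indicator {t} x)"
    and h_ind: "(\<lambda>x. h x * (indicator {t} x)\<^sup>2) = (\<lambda>x. h t * indicator {t} x)"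
    by (auto simp: indicator_def)
  have "ennreal 1 \<le> ennreal C * ennreal (g t powr (1/4)) * ennreal (h t powr (1/4))"
    using ineq choquet_nonempty_measure_singleton[OF t, of 1]
    by (simp add: \<nu>_def g_ind h_ind choquet_nonempty_measure_singleton[OF t] gh root4_ennreal_ennreal)
  also have "\<dots> = ennreal (C * (g t * h t) powr (1/4))"
    using \<open>C \<ge> 0\<close> gh by (simp add: powr_mult ennreal_mult mult.assoc)
  finally show ?thesis
    by (simp add: ennreal_le_iff2)
qed

lemma exists_small_fourth_root:
  fixes u :: "'a \<Rightarrow> real"
  assumes "S \<noteq> {}" and u_nonneg: "\<forall>x\<in>S. u x \<ge> 0" and inf_zero: "(INF x\<in>S. u x) = 0"
    and "C \<ge> 0"
  shows "\<exists>t\<in>S. C * u t powr (1/4) < 1"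
proof -
  define r where "r = 1 / (C + 1)"
  have r_pos: "r > 0" using \<open>C \<ge> 0\<close> by (simp add: r_def)
  have "bdd_below (u ` S)" using u_nonneg by (intro bdd_belowI[of _ 0]) auto
  then obtain t where t: "t \<in> S" "u t < r ^ 4"
    using cINF_less_iff[OF \<open>S \<noteq> {}\<close>] inf_zero r_pos by (metis zero_less_power)
  have "u t powr (1/4) < (r ^ 4) powr (1/4)"
    using t u_nonneg by (intro powr_less_mono2) auto
  also have "(r ^ 4) powr (1/4) = r powr (real 4 * (1/4))"
    using r_pos by (simp only: powr_realpow[symmetric] powr_powr)
  also have "\<dots> = r" using r_pos by simp
  finally have "C * u t powr (1/4) \<le> C * r"
    using \<open>C \<ge> 0\<close> by (intro mult_left_mono) auto
  also have "C * r < 1" using \<open>C \<ge> 0\<close> by (simp add: r_def field_simps)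
  finally show ?thesis using t by blast
qed

theorem mainTheorem4:
  fixes M :: "'a measure" and g h :: "'a \<Rightarrow> real"
  assumes singletons: "\<forall>t\<in>space M. {t} \<in> sets M"
    and g_meas: "g \<in> borel_measurable M" and g_nonneg: "\<forall>x\<in>space M. g x \<ge> 0"
    and h_meas: "h \<in> borel_measurable M" and h_nonneg: "\<forall>x\<in>space M. h x \<ge> 0"
    and nonempty: "space M \<noteq> {}"
    and inf_zero: "(INF x\<in>space M. g x * h x) = 0"
  shows "\<not> (\<exists>c :: ('a set \<Rightarrow> ennreal) \<Rightarrow> real.
            (\<forall>\<mu>. monotone_measure M \<mu> \<longrightarrow> c \<mu> \<ge> 0) \<and>
            (\<forall>\<mu> f. monotone_measure M \<mu> \<longrightarrow> f \<in> borel_measurable M \<longrightarrow>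
                 (\<forall>x\<in>space M. f x \<ge> 0) \<longrightarrow> choquet M \<mu> (space M) f < \<infinity> \<longrightarrow>
                 choquet M \<mu> (space M) f
                   \<le> ennreal (c \<mu>)
                      * root4_ennreal (choquet M \<mu> (space M) (\<lambda>x. g x * (f x)\<^sup>2))
                      * root4_ennreal (choquet M \<mu> (space M) (\<lambda>x. h x * (f x)\<^sup>2))))"
    (is "\<not> (\<exists>c. ?bound c)")
proof
  assume "\<exists>c. ?bound c"
  then obtain c where c: "?bound c" ..
  let ?\<nu> = "nonempty_measure M"
  have \<nu>: "monotone_measure M ?\<nu>"
    using monotone_measure_nonempty_measure[OF nonempty] .
  then have c_nonneg: "c ?\<nu> \<ge> 0" using c by blast
  obtain t where t: "t \<in> space M" "c ?\<nu> * (g t * h t) powr (1/4) < 1"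
    using exists_small_fourth_root[OF nonempty _ inf_zero c_nonneg] g_nonneg h_nonneg by auto
  have st: "{t} \<in> sets M" using singletons t by blast
  have "choquet M ?\<nu> (space M) (indicator {t}) < \<infinity>"
    using choquet_nonempty_measure_singleton[OF t(1) st, of 1] by simp
  then have "1 \<le> c ?\<nu> * (g t * h t) powr (1/4)"
    using c \<nu> st t g_nonneg h_nonneg
    by (intro choquet_inequality_at_singleton[OF t(1) st _ _ c_nonneg, of g h])
       (auto simp: borel_measurable_indicator)
  with t show False by linarith
qed

end
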